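(* Let $n,r\in\mathbb{Z}_{\geq1}$ and $m\in\mathbb{Z}_{\geq0}$. Then \[ \mathrm{M}_m(\omega_{n,r})=\sum_{j\geq0}j^m\omega_{n,r}(j)=\sum_{i=0}^{\min(m,r)}\left\{m\atop i\right\}n^{-i}. \] In particular, if $m\leq r$, then $\mathrm{M}_m(\omega_{n,r})=\mathrm{M}_m(\rho_{1/n})$, where $\rho_{1/n}$ is the Poisson distribution with mean $1/n$.
   Context: $C_n\wr S_r=C_n^r\rtimes S_r$ (with $S_r$ permuting coordinates) acts on $B(n,r)=C_n\times\{1,\dots,r\}$ by $((\zeta_1,\dots,\zeta_r),\pi)\cdot(\zeta,i)=(\zeta_i\zeta,\pi(i))$. For $\sigma\in C_n\wr S_r$, $\mathrm{Fix}(\sigma)$ is its set of fixed points in $B(n,r)$ (its size is divisible by $n$). The distribution $\omega_{n,r}:\mathbb{Z}_{\geq0}\to\mathbb{R}_{\geq0}$ is $\omega_{n,r}(j)=|\{\sigma\in C_n\wr S_r: |\mathrm{Fix}(\sigma)|=jn\}|/|C_n\wr S_r|$. For a distribution $\omega$ on $\mathbb{Z}_{\geq0}$, $\mathrm{M}_m(\omega)=\sum_{j\ge0}j^m\omega(j)$. $\rho_\lambda(j)=e^{-\lambda}\lambda^j/j!$. $\left\{m\atop i\right\}$ is the Stirling number of the second kind, with $\left\{m\atop 0\right\}=1$ if $m=0$ and $0$ otherwise. *)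

theory Defs
  imports "HOL-Analysis.Analysis" "HOL-Combinatorics.Stirling" "HOL-Combinatorics.Permutations"
begin

text \<open>The cyclic group C_n is modelled additively as the residues {0..<n} (addition mod n).\<close>

definition wreath :: "nat \<Rightarrow> nat \<Rightarrow> ((nat \<Rightarrow> nat) \<times> (nat \<Rightarrow> nat)) set" where
  "wreath n r = {(z, p). z \<in> {..<r} \<rightarrow>\<^sub>E {..<n} \<and> p permutes {..<r}}"

definition Bset :: "nat \<Rightarrow> nat \<Rightarrow> (nat \<times> nat) set" where
  "Bset n r = {..<n} \<times> {..<r}"

definition wact :: "nat \<Rightarrow> ((nat \<Rightarrow> nat) \<times> (nat \<Rightarrow> nat)) \<Rightarrow> nat \<times> nat \<Rightarrow> nat \<times> nat" where
  "wact n \<sigma> x = ((fst \<sigma> (snd x) + fst x) mod n, snd \<sigma> (snd x))"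

definition Fix :: "nat \<Rightarrow> nat \<Rightarrow> ((nat \<Rightarrow> nat) \<times> (nat \<Rightarrow> nat)) \<Rightarrow> (nat \<times> nat) set" where
  "Fix n r \<sigma> = {x \<in> Bset n r. wact n \<sigma> x = x}"

definition omega :: "nat \<Rightarrow> nat \<Rightarrow> nat \<Rightarrow> real" where
  "omega n r j = real (card {\<sigma> \<in> wreath n r. card (Fix n r \<sigma>) = j * n}) / real (card (wreath n r))"

definition moment :: "nat \<Rightarrow> (nat \<Rightarrow> real) \<Rightarrow> real" where
  "moment m w = (\<Sum>j. real j ^ m * w j)"

definition poisson :: "real \<Rightarrow> nat \<Rightarrow> real" where
  "poisson l j = exp (- l) * l ^ j / fact j"

end

theory Submission
  imports Defs
begin

text \<open>
  A point \<open>(c, i)\<close> is fixed by \<open>(z, p)\<close> exactly when \<open>p i = i\<close> and \<open>z i = 0\<close>; then the whole fibre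
  \<open>C\<^sub>n \<times> {i}\<close> is fixed, so \<open>|Fix \<sigma>| = n k\<close> where \<open>k\<close> counts the fixed fibres. The \<open>i\<close>-th falling
  factorial of \<open>k\<close> counts injective lists of \<open>i\<close> fixed fibres; swapping the two summations, each
  injective list of \<open>i\<close> coordinates is fixed pointwise by \<open>(r - i)! n\<^sup>r\<^sup>-\<^sup>i\<close> group elements, so the
  \<open>i\<close>-th factorial moment of \<open>k\<close> is \<open>n\<^sup>-\<^sup>i\<close> for \<open>i \<le> r\<close> and \<open>0\<close> otherwise. Expanding \<open>k\<^sup>m\<close> in
  falling factorials with Stirling numbers of the second kind gives the formula. The Poisson
  distribution with mean \<open>\<lambda>\<close> has factorial moments \<open>\<lambda>\<^sup>i\<close> for all \<open>i\<close>, which agree with \<open>n\<^sup>-\<^sup>i\<close>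
  up to \<open>i = r\<close>.
\<close>

fun falling_fact :: "nat \<Rightarrow> nat \<Rightarrow> nat" where
  "falling_fact 0 x = 1"
| "falling_fact (Suc i) x = falling_fact i x * (x - i)"

lemma falling_fact_eq_0: "x < i \<Longrightarrow> falling_fact i x = 0"
  by (induction i) (auto simp: less_Suc_eq)

lemma falling_fact_mult_fact: "i \<le> x \<Longrightarrow> falling_fact i x * fact (x - i) = (fact x :: nat)"
proof (induction i)
  case (Suc i)
  then have "x - i = Suc (x - Suc i)" by simp
  have "falling_fact (Suc i) x * fact (x - Suc i) = falling_fact i x * ((x - i) * fact (x - Suc i))"
    by simp
  also have "(x - i) * fact (x - Suc i) = (fact (x - i) :: nat)"
    unfolding \<open>x - i = Suc (x - Suc i)\<close> by simp
  finally show ?case using Suc by simp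
qed simp

lemma falling_fact_eq_prod: "i \<le> x \<Longrightarrow> falling_fact i x = \<Prod>{x - i + 1 .. x}"
proof (induction i)
  case (Suc i)
  then have "{x - Suc i + 1 .. x} = insert (x - i) {x - i + 1 .. x}" by auto
  with Suc show ?case by (simp add: mult.commute)
qed simp

lemma mult_falling_fact: "x * falling_fact i x = falling_fact (Suc i) x + i * falling_fact i x"
proof (cases "i \<le> x")
  case True
  then show ?thesis by (simp add: algebra_simps le_add_diff_inverse2 flip: add_mult_distrib2)
qed (simp add: falling_fact_eq_0)

lemma power_eq_sum_Stirling_falling_fact:
  "x ^ m = (\<Sum>i\<le>m. Stirling m i * falling_fact i x)"
proof (induction m)
  case (Suc m)
  have shift: "(\<Sum>i\<le>m. i * Stirling m i * falling_fact i x)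
             = (\<Sum>i\<le>m. Suc i * Stirling m (Suc i) * falling_fact (Suc i) x)"
  proof -
    have "(\<Sum>i\<le>m. i * Stirling m i * falling_fact i x)
        = (\<Sum>i\<le>Suc m. i * Stirling m i * falling_fact i x)"
      by simp
    then show ?thesis
      by (subst (asm) sum.atMost_Suc_shift) (simp del: falling_fact.simps)
  qed
  have "(\<Sum>i\<le>Suc m. Stirling (Suc m) i * falling_fact i x)
      = (\<Sum>i\<le>m. Stirling (Suc m) (Suc i) * falling_fact (Suc i) x)"
    by (subst sum.atMost_Suc_shift) (simp del: falling_fact.simps)
  also have "\<dots> = (\<Sum>i\<le>m. Stirling m i * falling_fact (Suc i) x)
                 + (\<Sum>i\<le>m. Suc i * Stirling m (Suc i) * falling_fact (Suc i) x)"
    by (simp add: sum.distrib distrib_right del: falling_fact.simps mult_Suc)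
  also have "\<dots> = (\<Sum>i\<le>m. Stirling m i * (x * falling_fact i x))"
    unfolding shift[symmetric]
    by (simp add: mult_falling_fact algebra_simps sum.distrib del: falling_fact.simps)
  also have "\<dots> = x ^ Suc m"
    using Suc by (simp add: sum_distrib_left mult.left_commute del: falling_fact.simps)
  finally show ?case ..
qed simp

definition distinct_lists :: "nat \<Rightarrow> 'a set \<Rightarrow> 'a list set" where
  "distinct_lists i S = {xs. length xs = i \<and> distinct xs \<and> set xs \<subseteq> S}"

lemma finite_distinct_lists: "finite S \<Longrightarrow> finite (distinct_lists i S)"
  unfolding distinct_lists_def
  by (rule finite_subset[OF _ finite_lists_length_eq[of S i]]) auto

lemma card_distinct_lists:
  assumes "finite S"
  shows "card (distinct_lists i S) = falling_fact i (card S)"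
proof (cases "i \<le> card S")
  case True
  then show ?thesis
    using assms by (simp add: distinct_lists_def card_lists_distinct_length_eq falling_fact_eq_prod)
next
  case False
  have "length xs \<le> card S" if "distinct xs" "set xs \<subseteq> S" for xs :: "'a list"
    using that card_mono[OF assms] by (metis distinct_card)
  with False have "distinct_lists i S = {}"
    unfolding distinct_lists_def by auto
  with False show ?thesis by (simp add: falling_fact_eq_0)
qed

lemma sum_card_filter_swap:
  assumes "finite A" "finite B"
  shows "(\<Sum>a\<in>A. card {b\<in>B. P a b}) = (\<Sum>b\<in>B. card {a\<in>A. P a b})"
proof -
  have "(\<Sum>a\<in>A. card {b\<in>B. P a b}) = (\<Sum>a\<in>A. \<Sum>b\<in>B. if P a b then 1 else 0)"
    using assms by (simp add: sum.inter_filter[symmetric])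
  also have "\<dots> = (\<Sum>b\<in>B. \<Sum>a\<in>A. if P a b then 1 else 0)"
    by (rule sum.swap)
  also have "\<dots> = (\<Sum>b\<in>B. card {a\<in>A. P a b})"
    using assms by (simp add: sum.inter_filter[symmetric])
  finally show ?thesis .
qed

lemma sum_of_nat_card_fibres:
  fixes f :: "'b \<Rightarrow> 'c::comm_semiring_1"
  assumes "finite S" "finite T" "h ` S \<subseteq> T"
  shows "(\<Sum>y\<in>T. f y * of_nat (card {x\<in>S. h x = y})) = (\<Sum>x\<in>S. f (h x))"
proof -
  have "(\<Sum>x\<in>S. f (h x)) = (\<Sum>y\<in>T. \<Sum>x\<in>{x\<in>S. h x = y}. f (h x))"
    using sum.group[OF assms, of "\<lambda>x. f (h x)"] by simp
  also have "\<dots> = (\<Sum>y\<in>T. f y * of_nat (card {x\<in>S. h x = y}))"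
    by (intro sum.cong) (auto simp: mult.commute)
  finally show ?thesis ..
qed

lemma permutes_Diff_iff:
  assumes "A \<subseteq> S"
  shows "p permutes (S - A) \<longleftrightarrow> p permutes S \<and> (\<forall>a\<in>A. p a = a)"
  using assms permutes_subset[of p "S - A" S] permutes_not_in[of p "S - A"]
  unfolding permutes_def by blast

lemma wreath_eq: "wreath n r = ({..<r} \<rightarrow>\<^sub>E {..<n}) \<times> {p. p permutes {..<r}}"
  unfolding wreath_def by auto

lemma finite_wreath: "finite (wreath n r)"
  unfolding wreath_eq by (simp add: finite_PiE finite_permutations)

lemma card_wreath: "card (wreath n r) = n ^ r * fact r"
  unfolding wreath_eq by (simp add: card_cartesian_product card_PiE card_permutations)

definition fixed_fibres :: "nat \<Rightarrow> (nat \<Rightarrow> nat) \<times> (nat \<Rightarrow> nat) \<Rightarrow> nat set" where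
  "fixed_fibres r \<sigma> = {i\<in>{..<r}. snd \<sigma> i = i \<and> fst \<sigma> i = 0}"

lemma fixed_fibres_subset: "fixed_fibres r \<sigma> \<subseteq> {..<r}"
  unfolding fixed_fibres_def by auto

lemma card_fixed_fibres_le: "card (fixed_fibres r \<sigma>) \<le> r"
  using card_mono[OF _ fixed_fibres_subset] by fastforce

lemma add_mod_eq_self_iff:
  fixes a c n :: nat
  assumes "a < n" "c < n"
  shows "(a + c) mod n = c \<longleftrightarrow> a = 0"
proof (cases "a + c < n")
  case False
  with assms have "(a + c) mod n = a + c - n" by (simp add: mod_if)
  with assms show ?thesis by auto
qed simp

lemma Fix_eq:
  assumes "\<sigma> \<in> wreath n r"
  shows "Fix n r \<sigma> = {..<n} \<times> fixed_fibres r \<sigma>"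
proof (rule set_eqI)
  fix x :: "nat \<times> nat"
  obtain z p where \<sigma>: "\<sigma> = (z, p)" by force
  obtain c i where x: "x = (c, i)" by force
  have "z i < n" if "i < r" using that assms unfolding \<sigma> wreath_def by auto
  then have "c < n \<and> i < r \<and> (z i + c) mod n = c \<longleftrightarrow> c < n \<and> i < r \<and> z i = 0"
    using add_mod_eq_self_iff by blast
  then show "x \<in> Fix n r \<sigma> \<longleftrightarrow> x \<in> {..<n} \<times> fixed_fibres r \<sigma>"
    unfolding Fix_def Bset_def wact_def fixed_fibres_def \<sigma> x by auto
qed

lemma card_Fix:
  assumes "\<sigma> \<in> wreath n r"
  shows "card (Fix n r \<sigma>) = n * card (fixed_fibres r \<sigma>)"
  using Fix_eq[OF assms] by (simp add: card_cartesian_product)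

lemma omega_eq:
  assumes "n \<ge> 1"
  shows "omega n r j = real (card {\<sigma>\<in>wreath n r. card (fixed_fibres r \<sigma>) = j}) / real (card (wreath n r))"
proof -
  have "{\<sigma>\<in>wreath n r. card (Fix n r \<sigma>) = j * n} = {\<sigma>\<in>wreath n r. card (fixed_fibres r \<sigma>) = j}"
    using card_Fix assms by (auto simp: mult.commute)
  then show ?thesis unfolding omega_def by simp
qed

lemma moment_omega_eq_average:
  assumes "n \<ge> 1"
  shows "moment m (omega n r)
    = (\<Sum>\<sigma>\<in>wreath n r. real (card (fixed_fibres r \<sigma>)) ^ m) / real (card (wreath n r))"
proof -
  let ?k = "\<lambda>\<sigma>. card (fixed_fibres r \<sigma>)"
  have "moment m (omega n r) = (\<Sum>j\<le>r. real j ^ m * omega n r j)"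
    unfolding moment_def
  proof (rule suminf_finite)
    fix j assume "j \<notin> {..r}"
    then have empty: "{\<sigma>\<in>wreath n r. ?k \<sigma> = j} = {}"
      using card_fixed_fibres_le[of r] by auto
    show "real j ^ m * omega n r j = 0" unfolding omega_eq[OF assms] empty by simp
  qed simp
  also have "\<dots> = (\<Sum>j\<le>r. real j ^ m * real (card {\<sigma>\<in>wreath n r. ?k \<sigma> = j})) / real (card (wreath n r))"
    by (simp add: omega_eq[OF assms] sum_divide_distrib)
  also have "(\<Sum>j\<le>r. real j ^ m * real (card {\<sigma>\<in>wreath n r. ?k \<sigma> = j})) = (\<Sum>\<sigma>\<in>wreath n r. real (?k \<sigma>) ^ m)"
    using sum_of_nat_card_fibres[OF finite_wreath, where T = "{..r}" and h = ?k and f = "\<lambda>j. real j ^ m"]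
    by (simp add: card_fixed_fibres_le image_subset_iff)
  finally show ?thesis .
qed

lemma card_wreath_fixing:
  assumes "A \<subseteq> {..<r}" "n \<ge> 1"
  shows "card {\<sigma>\<in>wreath n r. A \<subseteq> fixed_fibres r \<sigma>} = fact (r - card A) * n ^ (r - card A)"
proof -
  have "z \<in> (\<Pi>\<^sub>E j\<in>{..<r}. if j \<in> A then {0} else {..<n})
      \<longleftrightarrow> z \<in> {..<r} \<rightarrow>\<^sub>E {..<n} \<and> (\<forall>a\<in>A. z a = 0)" for z :: "nat \<Rightarrow> nat"
    using assms by (auto simp: PiE_def Pi_def split: if_splits)
  then have "{\<sigma>\<in>wreath n r. A \<subseteq> fixed_fibres r \<sigma>} =
     (\<Pi>\<^sub>E j\<in>{..<r}. if j \<in> A then {0} else {..<n}) \<times> {p. p permutes ({..<r} - A)}"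
    using assms unfolding wreath_def fixed_fibres_def permutes_Diff_iff[OF assms(1)] by auto
  moreover have "card ({..<r} - A) = r - card A"
    using assms(1) finite_subset[OF assms(1)] by (simp add: card_Diff_subset)
  moreover have "(\<Prod>j<r. card (if j \<in> A then {0::nat} else {..<n})) = n ^ card ({..<r} - A)"
    using prod.If_cases[of "{..<r}" "\<lambda>j. j \<in> A" "\<lambda>_. 1::nat" "\<lambda>_. n"]
    by (simp add: if_distrib Diff_eq cong: if_cong)
  ultimately show ?thesis
    by (simp add: card_cartesian_product card_PiE card_permutations)
qed

text \<open>Double counting pairs of a group element and an injective list of its fixed lines.\<close>

lemma sum_falling_fact_fixed_fibres:
  assumes "n \<ge> 1"
  shows "(\<Sum>\<sigma>\<in>wreath n r. falling_fact i (card (fixed_fibres r \<sigma>)))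
    = falling_fact i r * (fact (r - i) * n ^ (r - i))"
proof -
  have fin: "finite (fixed_fibres r \<sigma>)" for \<sigma>
    using fixed_fibres_subset finite_subset by blast
  have lists: "distinct_lists i (fixed_fibres r \<sigma>)
      = {xs\<in>distinct_lists i {..<r}. set xs \<subseteq> fixed_fibres r \<sigma>}" for \<sigma>
    using fixed_fibres_subset[of r \<sigma>] unfolding distinct_lists_def by auto
  have "(\<Sum>\<sigma>\<in>wreath n r. falling_fact i (card (fixed_fibres r \<sigma>)))
      = (\<Sum>\<sigma>\<in>wreath n r. card {xs\<in>distinct_lists i {..<r}. set xs \<subseteq> fixed_fibres r \<sigma>})"
    by (simp add: card_distinct_lists[OF fin, symmetric] lists)
  also have "\<dots> = (\<Sum>xs\<in>distinct_lists i {..<r}. card {\<sigma>\<in>wreath n r. set xs \<subseteq> fixed_fibres r \<sigma>})"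
    by (rule sum_card_filter_swap[OF finite_wreath finite_distinct_lists]) simp
  also have "\<dots> = (\<Sum>xs\<in>distinct_lists i {..<r}. fact (r - i) * n ^ (r - i))"
    by (intro sum.cong) (auto simp: card_wreath_fixing[OF _ assms] distinct_lists_def distinct_card)
  also have "\<dots> = falling_fact i r * (fact (r - i) * n ^ (r - i))"
    using card_distinct_lists[of "{..<r}" i] by simp
  finally show ?thesis .
qed

lemma average_falling_fact_fixed_fibres:
  assumes "n \<ge> 1"
  shows "real (\<Sum>\<sigma>\<in>wreath n r. falling_fact i (card (fixed_fibres r \<sigma>))) / real (card (wreath n r))
    = (if i \<le> r then 1 / real n ^ i else 0)"
proof (cases "i \<le> r")
  case True
  then have "real (falling_fact i r) * fact (r - i) = fact r"
    by (metis falling_fact_mult_fact of_nat_fact of_nat_mult)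
  moreover have "real n ^ r = real n ^ (r - i) * real n ^ i"
    using True by (simp flip: power_add)
  ultimately show ?thesis
    using True assms by (simp add: sum_falling_fact_fixed_fibres[OF assms] card_wreath field_simps)
qed (simp add: sum_falling_fact_fixed_fibres[OF assms] falling_fact_eq_0)

lemma moment_omega:
  assumes "n \<ge> 1"
  shows "moment m (omega n r) = (\<Sum>i=0..min m r. real (Stirling m i) / real n ^ i)"
proof -
  let ?k = "\<lambda>\<sigma>. card (fixed_fibres r \<sigma>)"
  let ?avg = "\<lambda>i. real (\<Sum>\<sigma>\<in>wreath n r. falling_fact i (?k \<sigma>)) / real (card (wreath n r))"
  have "(\<Sum>\<sigma>\<in>wreath n r. ?k \<sigma> ^ m)
      = (\<Sum>\<sigma>\<in>wreath n r. \<Sum>i\<le>m. Stirling m i * falling_fact i (?k \<sigma>))"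
    using power_eq_sum_Stirling_falling_fact by simp
  also have "\<dots> = (\<Sum>i\<le>m. Stirling m i * (\<Sum>\<sigma>\<in>wreath n r. falling_fact i (?k \<sigma>)))"
    by (subst sum.swap) (simp add: sum_distrib_left)
  finally have "moment m (omega n r)
      = real (\<Sum>i\<le>m. Stirling m i * (\<Sum>\<sigma>\<in>wreath n r. falling_fact i (?k \<sigma>))) / real (card (wreath n r))"
    by (simp only: moment_omega_eq_average[OF assms] flip: of_nat_power of_nat_sum)
  also have "\<dots> = (\<Sum>i\<le>m. real (Stirling m i) * ?avg i)"
    by (simp only: of_nat_sum[of _ "{..m}"] of_nat_mult sum_divide_distrib flip: times_divide_eq_right)
  also have "\<dots> = (\<Sum>i\<le>m. if i \<le> r then real (Stirling m i) / real n ^ i else 0)"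
    unfolding average_falling_fact_fixed_fibres[OF assms] by (intro sum.cong) auto
  also have "\<dots> = (\<Sum>i\<in>{i\<in>{..m}. i \<le> r}. real (Stirling m i) / real n ^ i)"
    by (rule sum.inter_filter[symmetric]) simp
  also have "{i\<in>{..m}. i \<le> r} = {0..min m r}" by auto
  finally show ?thesis .
qed

lemma falling_fact_exp_sums:
  fixes l :: real
  shows "(\<lambda>j. real (falling_fact i j) * (l ^ j / fact j)) sums (l ^ i * exp l)"
proof -
  have "(\<lambda>t. l ^ t / fact t) sums exp l"
    using exp_converges[of l] by (simp add: divide_inverse mult.commute)
  then have "(\<lambda>t. l ^ i * (l ^ t / fact t)) sums (l ^ i * exp l)"
    by (rule sums_mult)
  moreover have "real (falling_fact i (t + i)) * (l ^ (t + i) / fact (t + i)) = l ^ i * (l ^ t / fact t)" for t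
  proof -
    have "real (falling_fact i (t + i)) * fact t = fact (t + i)"
      using falling_fact_mult_fact[of i "t + i"] by (metis add_diff_cancel_right' le_add2 of_nat_fact of_nat_mult)
    then show ?thesis by (simp add: field_simps power_add)
  qed
  ultimately show ?thesis
    by (subst sums_zero_iff_shift[of i, symmetric]) (auto simp: falling_fact_eq_0)
qed

lemma moment_poisson: "moment m (poisson l) = (\<Sum>i\<le>m. real (Stirling m i) * l ^ i)"
proof -
  have "real j ^ m * poisson l j
      = (\<Sum>i\<le>m. real (Stirling m i) * exp (- l) * (real (falling_fact i j) * (l ^ j / fact j)))" for j
  proof -
    have "real j ^ m = real (j ^ m)" by simp
    also have "\<dots> = (\<Sum>i\<le>m. real (Stirling m i) * real (falling_fact i j))"
      by (subst power_eq_sum_Stirling_falling_fact) simp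
    finally show ?thesis
      by (simp add: poisson_def sum_distrib_left sum_distrib_right sum_divide_distrib mult_ac
          del: falling_fact.simps)
  qed
  moreover have "(\<lambda>j. \<Sum>i\<le>m. real (Stirling m i) * exp (- l) * (real (falling_fact i j) * (l ^ j / fact j)))
      sums (\<Sum>i\<le>m. real (Stirling m i) * exp (- l) * (l ^ i * exp l))"
    by (intro sums_sum sums_mult falling_fact_exp_sums)
  ultimately show ?thesis
    unfolding moment_def by (simp add: sums_iff exp_minus field_simps)
qed

theorem mainTheorem3:
  fixes n r m :: nat
  assumes "n \<ge> 1" and "r \<ge> 1"
  shows "moment m (omega n r) = (\<Sum>i=0..min m r. real (Stirling m i) / real n ^ i)
    \<and> (m \<le> r \<longrightarrow> moment m (omega n r) = moment m (poisson (1 / real n)))"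
  using moment_omega[OF assms(1)]
  by (simp add: moment_poisson atLeast0AtMost power_one_over min_absorb1)

end
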